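(* Let $(a_i)$ be a real sequence and $t=(t_i)$ an increasing real sequence with the same index set. Then $t\in T_a$ if and only if $$\sum_{i=1}^n\big(a_{\lfloor p_i\rfloor_t}-a_{\lfloor q_i\rfloor_t}\big)\le\sum_{i=1}^n\left(\{q_i\}_t\frac{\Delta a_{\lfloor q_i\rfloor_t}}{\Delta t_{\lfloor q_i\rfloor_t}}-\{p_i\}_t\frac{\Delta a_{\lfloor p_i\rfloor_t}}{\Delta t_{\lfloor p_i\rfloor_t}}\right)$$ holds for all $n\ge2$ and all $(p_1,\dots,p_n),(q_1,\dots,q_n)\in I_t^n$ with $(p_1,\dots,p_n)\prec(q_1,\dots,q_n)$ (a term with $\{q\}_t=0$ is interpreted as $0$, even when $\lfloor q\rfloor_t$ is the last index).
   Context: For a real sequence $(x_i)$, $\Delta x_i=x_{i+1}-x_i$. "Increasing" means strictly increasing. $T_a$ is the set of increasing real sequences $t=(t_i)$ with the same index set as $a$ such that $(\Delta a_i/\Delta t_i)$ is non-decreasing. For increasing $t$: $I_t=[t_1,t_N]$ if $t=(t_1,\dots,t_N)$ is finite, and $I_t=[t_1,\lim_{i\to\infty}t_i)$ if $t$ is infinite. For $q\in I_t$, $\lfloor q\rfloor_t$ is the index $i$ of the largest $t_i$ with $t_i\le q$, and $\{q\}_t=q-t_{\lfloor q\rfloor_t}$. For $x,y\in\mathbb{R}^n$, with components in decreasing order $x_{[1]}\ge\dots\ge x_{[n]}$, $y_{[1]}\ge\dots\ge y_{[n]}$, $x\prec y$ means $\sum_{i=1}^k x_{[i]}\le\sum_{i=1}^k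 y_{[i]}$ for $k=1,\dots,n-1$ and $\sum_{i=1}^n x_i=\sum_{i=1}^n y_i$. *)

theory Defs
  imports Complex_Main
begin

text \<open>Sequences are functions nat => real; the index set J is either {1..N} (N >= 1)
  or {1..} (infinite sequence).\<close>

definition valid_index_set :: "nat set \<Rightarrow> bool" where
  "valid_index_set J \<longleftrightarrow> (\<exists>N\<ge>1. J = {1..N}) \<or> J = {1..}"

definition Delta :: "(nat \<Rightarrow> real) \<Rightarrow> nat \<Rightarrow> real" where
  "Delta x i = x (Suc i) - x i"

definition increasing_on :: "nat set \<Rightarrow> (nat \<Rightarrow> real) \<Rightarrow> bool" where
  "increasing_on J t \<longleftrightarrow> (\<forall>i\<in>J. \<forall>j\<in>J. i < j \<longrightarrow> t i < t j)"

text \<open>The set T_a: increasing t such that (Delta a_i / Delta t_i) is non-decreasing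
  (indices i of the difference sequence: i and i+1 both in J).\<close>
definition T_set :: "nat set \<Rightarrow> (nat \<Rightarrow> real) \<Rightarrow> (nat \<Rightarrow> real) set" where
  "T_set J a = {t. increasing_on J t \<and>
     (\<forall>i j. i \<in> J \<and> Suc j \<in> J \<and> i \<le> j \<longrightarrow>
        Delta a i / Delta t i \<le> Delta a j / Delta t j)}"

text \<open>I_t = [t_1, t_N] if finite, [t_1, lim t_i) if infinite (the limit may be +infinity,
  so [t_1, lim t_i) is the set of q >= t_1 lying below some t_i).\<close>
definition I_set :: "nat set \<Rightarrow> (nat \<Rightarrow> real) \<Rightarrow> real set" where
  "I_set J t = (if finite J then {t 1 .. t (Max J)}
               else {q. t 1 \<le> q \<and> (\<exists>i\<in>J. q < t i)})"

definition floor_t :: "nat set \<Rightarrow> (nat \<Rightarrow> real) \<Rightarrow> real \<Rightarrow> nat" where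
  "floor_t J t q = (THE i. i \<in> J \<and> t i \<le> q \<and> (\<forall>j\<in>J. t j \<le> q \<longrightarrow> t j \<le> t i))"

definition frac_t :: "nat set \<Rightarrow> (nat \<Rightarrow> real) \<Rightarrow> real \<Rightarrow> real" where
  "frac_t J t q = q - t (floor_t J t q)"

definition slope_term :: "nat set \<Rightarrow> (nat \<Rightarrow> real) \<Rightarrow> (nat \<Rightarrow> real) \<Rightarrow> real \<Rightarrow> real" where
  "slope_term J a t q = (if frac_t J t q = 0 then 0
     else frac_t J t q * (Delta a (floor_t J t q) / Delta t (floor_t J t q)))"

definition majorized :: "real list \<Rightarrow> real list \<Rightarrow> bool" where
  "majorized xs ys \<longleftrightarrow> length xs = length ys \<and>
     (\<forall>k\<in>{1..<length xs}. sum_list (take k (rev (sort xs))) \<le> sum_list (take k (rev (sort ys)))) \<and>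
     sum_list xs = sum_list ys"

end

theory Submission
  imports Defs "HOL-Library.Multiset"
begin

(* f(r) = a(floor_t r) + frac_t r * Delta a / Delta t, taken at floor_t r, is the piecewise linear
   interpolant of the points (t_i, a_i); the inequality says sum f(p_i) <= sum f(q_i) for p majorized
   by q, and t in T_a says that f is convex.  Below any finite set of points, f is an affine function
   plus hinges max (r - t_k) 0 weighted by the slope increments, which are nonnegative exactly when
   t is in T_a; each hinge sum is monotone under majorization (Karamata).  Conversely, (x, x) is
   majorized by (x - h, x + h), and at a node x this forces the two adjacent slopes to be in order. *)

lemma sum_list_take_minus_le_sum_hinge:
  fixes xs :: "real list"
  assumes "k \<le> length xs"
  shows "sum_list (take k xs) - real k * c \<le> (\<Sum>x\<leftarrow>xs. max (x - c) 0)"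
  using assms
proof (induction xs arbitrary: k)
  case Nil
  then show ?case by simp
next
  case (Cons x xs)
  show ?case
  proof (cases k)
    case 0
    have "0 \<le> (\<Sum>x\<leftarrow>xs. max (x - c) 0)" by (rule sum_list_nonneg) auto
    then show ?thesis using 0 by simp
  next
    case (Suc k')
    with Cons have "sum_list (take k' xs) - real k' * c \<le> (\<Sum>x\<leftarrow>xs. max (x - c) 0)" by simp
    then show ?thesis using Suc by (simp add: algebra_simps)
  qed
qed

lemma sum_hinge_sorted_desc:
  fixes xs :: "real list"
  assumes "sorted_wrt (\<ge>) xs"
  shows "(\<Sum>x\<leftarrow>xs. max (x - c) 0)
    = sum_list (takeWhile (\<lambda>x. x > c) xs) - real (length (takeWhile (\<lambda>x. x > c) xs)) * c"
  using assms
proof (induction xs)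
  case Nil
  then show ?case by simp
next
  case (Cons x xs)
  show ?case
  proof (cases "x > c")
    case True
    then show ?thesis using Cons by (simp add: algebra_simps)
  next
    case False
    with Cons.prems have "\<forall>y\<in>set xs. max (y - c) 0 = 0" by auto
    then have "(\<Sum>y\<leftarrow>xs. max (y - c) 0) = 0" by (metis (mono_tags, lifting) map_eq_conv sum_list_0)
    then show ?thesis using False by simp
  qed
qed

lemma sum_list_map_rev_sort: "(\<Sum>x\<leftarrow>rev (sort xs). f x) = (\<Sum>x\<leftarrow>xs. f x :: 'b::comm_monoid_add)"
  by (metis mset_map mset_rev mset_sort sum_mset_sum_list)

lemma majorized_sum_hinge_le:
  assumes maj: "majorized p q"
  shows "(\<Sum>x\<leftarrow>p. max (x - c) 0) \<le> (\<Sum>x\<leftarrow>q. max (x - c) 0)"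
proof -
  define ps where "ps = rev (sort p)"
  define qs where "qs = rev (sort q)"
  \<comment> \<open>only the k entries above c contribute, so the hinge sum of p is a partial sum of ps minus k c\<close>
  define k where "k = length (takeWhile (\<lambda>x. x > c) ps)"
  have take_k: "takeWhile (\<lambda>x. x > c) ps = take k ps"
    by (metis k_def takeWhile_eq_take)
  have k_le: "k \<le> length qs"
    using maj length_takeWhile_le[of _ ps] by (simp add: k_def ps_def qs_def majorized_def)
  have partial_sums: "sum_list (take k ps) \<le> sum_list (take k qs)"
  proof (cases "k \<in> {1..<length p}")
    case True
    then show ?thesis using maj unfolding majorized_def ps_def qs_def by blast
  next
    case False
    then have "k = 0 \<or> k = length ps" using k_le maj by (auto simp: ps_def qs_def majorized_def)
    then show ?thesis
      using maj sum_list_map_rev_sort[of id p] sum_list_map_rev_sort[of id q] k_le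
      by (auto simp: ps_def qs_def majorized_def)
  qed
  have "(\<Sum>x\<leftarrow>p. max (x - c) 0) = sum_list (take k ps) - real k * c"
    using sum_hinge_sorted_desc[of ps c] take_k
    by (simp add: ps_def sorted_wrt_rev k_def sum_list_map_rev_sort)
  also have "\<dots> \<le> sum_list (take k qs) - real k * c" using partial_sums by simp
  also have "\<dots> \<le> (\<Sum>x\<leftarrow>q. max (x - c) 0)"
    using sum_list_take_minus_le_sum_hinge[OF k_le] by (simp add: qs_def sum_list_map_rev_sort)
  finally show ?thesis .
qed

lemma sum_list_map_sum_swap:
  "(\<Sum>x\<leftarrow>xs. \<Sum>k\<in>K. f k x) = (\<Sum>k\<in>K. \<Sum>x\<leftarrow>xs. f k x :: 'b::comm_monoid_add)"
  by (induction xs) (simp_all add: sum.distrib)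

lemma majorized_sum_convex_hinge_comb_le:
  fixes A B :: real and c d :: "'a \<Rightarrow> real"
  assumes maj: "majorized p q" and nonneg: "\<And>k. k \<in> K \<Longrightarrow> c k \<ge> 0"
  defines "g \<equiv> \<lambda>x. A + B * x + (\<Sum>k\<in>K. c k * max (x - d k) 0)"
  shows "(\<Sum>x\<leftarrow>p. g x) \<le> (\<Sum>x\<leftarrow>q. g x)"
proof -
  have expand: "(\<Sum>x\<leftarrow>xs. g x)
      = real (length xs) * A + B * sum_list xs + (\<Sum>k\<in>K. c k * (\<Sum>x\<leftarrow>xs. max (x - d k) 0))" for xs
    by (simp add: g_def sum_list_addf sum_list_const_mult sum_list_map_sum_swap sum_list_triv)
  have "(\<Sum>k\<in>K. c k * (\<Sum>x\<leftarrow>p. max (x - d k) 0)) \<le> (\<Sum>k\<in>K. c k * (\<Sum>x\<leftarrow>q. max (x - d k) 0))"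
    by (intro sum_mono mult_left_mono majorized_sum_hinge_le[OF maj] nonneg)
  then show ?thesis using maj unfolding expand majorized_def by simp
qed

lemma valid_index_set_one: "valid_index_set J \<Longrightarrow> 1 \<in> J"
  by (auto simp: valid_index_set_def)

lemma valid_index_set_ge_one: "valid_index_set J \<Longrightarrow> i \<in> J \<Longrightarrow> 1 \<le> i"
  by (auto simp: valid_index_set_def)

lemma valid_index_set_downward: "valid_index_set J \<Longrightarrow> i \<in> J \<Longrightarrow> 1 \<le> j \<Longrightarrow> j \<le> i \<Longrightarrow> j \<in> J"
  by (auto simp: valid_index_set_def)

lemma valid_index_set_infinite: "valid_index_set J \<Longrightarrow> infinite J \<Longrightarrow> J = {1..}"
  by (auto simp: valid_index_set_def)

lemma valid_index_set_finite:
  assumes "valid_index_set J" "finite J"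
  shows "J = {1..Max J}" "1 \<le> Max J"
proof -
  obtain N where "1 \<le> N" "J = {1..N}"
    using assms by (auto simp: valid_index_set_def infinite_Ici)
  moreover have "Max {1..N} = N" using \<open>1 \<le> N\<close> by (intro Max_eqI) auto
  ultimately show "J = {1..Max J}" "1 \<le> Max J" by simp_all
qed

lemma increasing_on_le: "increasing_on J t \<Longrightarrow> i \<in> J \<Longrightarrow> j \<in> J \<Longrightarrow> i \<le> j \<Longrightarrow> t i \<le> t j"
  by (metis increasing_on_def le_less order_refl)

lemma increasing_on_Suc: "increasing_on J t \<Longrightarrow> i \<in> J \<Longrightarrow> Suc i \<in> J \<Longrightarrow> t i < t (Suc i)"
  by (simp add: increasing_on_def)

lemma floor_t_eqI:
  assumes inc: "increasing_on J t" and "m \<in> J" "t m \<le> r" and "\<And>j. j \<in> J \<Longrightarrow> t j \<le> r \<Longrightarrow> j \<le> m"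
  shows "floor_t J t r = m"
  unfolding floor_t_def
proof (rule the_equality)
  show "m \<in> J \<and> t m \<le> r \<and> (\<forall>j\<in>J. t j \<le> r \<longrightarrow> t j \<le> t m)"
    using assms increasing_on_le[OF inc] by auto
next
  fix i assume i: "i \<in> J \<and> t i \<le> r \<and> (\<forall>j\<in>J. t j \<le> r \<longrightarrow> t j \<le> t i)"
  then have "t m \<le> t i" "i \<le> m" using assms by auto
  then show "i = m" using i inc \<open>m \<in> J\<close> unfolding increasing_on_def
    by (metis le_neq_implies_less not_le)
qed

lemma floor_t_segment:
  assumes inc: "increasing_on J t" and "m \<in> J" "Suc m \<in> J" "t m \<le> r" "r < t (Suc m)"
  shows "floor_t J t r = m"
proof (rule floor_t_eqI[OF inc \<open>m \<in> J\<close> \<open>t m \<le> r\<close>])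
  fix j assume "j \<in> J" "t j \<le> r"
  show "j \<le> m"
  proof (rule ccontr)
    assume "\<not> j \<le> m"
    then have "t (Suc m) \<le> t j" using increasing_on_le[OF inc \<open>Suc m \<in> J\<close> \<open>j \<in> J\<close>] by simp
    then show False using \<open>r < t (Suc m)\<close> \<open>t j \<le> r\<close> by simp
  qed
qed

definition slope :: "(nat \<Rightarrow> real) \<Rightarrow> (nat \<Rightarrow> real) \<Rightarrow> nat \<Rightarrow> real" where
  "slope a t k = Delta a k / Delta t k"

definition interpolant :: "nat set \<Rightarrow> (nat \<Rightarrow> real) \<Rightarrow> (nat \<Rightarrow> real) \<Rightarrow> real \<Rightarrow> real" where
  "interpolant J a t r = a (floor_t J t r) + slope_term J a t r"

lemma interpolant_segment:
  assumes "increasing_on J t" "m \<in> J" "Suc m \<in> J" "t m \<le> r" "r < t (Suc m)"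
  shows "interpolant J a t r = a m + slope a t m * (r - t m)"
  using floor_t_segment[OF assms]
  by (simp add: interpolant_def slope_term_def frac_t_def slope_def)

lemma interpolant_last_node:
  assumes "increasing_on J t" "finite J" "Max J \<in> J"
  shows "interpolant J a t (t (Max J)) = a (Max J)"
proof -
  have "floor_t J t (t (Max J)) = Max J"
    by (rule floor_t_eqI) (use assms in auto)
  then show ?thesis by (simp add: interpolant_def slope_term_def frac_t_def)
qed

lemma exists_segment:
  fixes t :: "nat \<Rightarrow> real"
  assumes "1 \<le> L" "t 1 \<le> r" "r < t L"
  shows "\<exists>m\<ge>1. m < L \<and> t m \<le> r \<and> r < t (Suc m)"
  using assms
proof (induction L)
  case 0
  then show ?case by simp
next
  case (Suc L)
  show ?case
  proof (cases "L \<ge> 1 \<and> r < t L")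
    case True
    then show ?thesis using Suc by (metis less_Suc_eq)
  next
    case False
    then have "L \<ge> 1" using Suc.prems by (cases "L = 0") auto
    then show ?thesis using False Suc.prems by (intro exI[of _ L]) auto
  qed
qed

definition hinge_expansion :: "(nat \<Rightarrow> real) \<Rightarrow> (nat \<Rightarrow> real) \<Rightarrow> nat \<Rightarrow> real \<Rightarrow> real" where
  "hinge_expansion a t M r = a 1 + slope a t 1 * (r - t 1)
     + (\<Sum>k\<in>{2..M}. (slope a t k - slope a t (k - 1)) * max (r - t k) 0)"

lemma slope_increments_telescope:
  assumes "\<And>i. 1 \<le> i \<Longrightarrow> i < m \<Longrightarrow> t i \<noteq> t (Suc i)" and "1 \<le> m"
  shows "a 1 + slope a t 1 * (r - t 1) + (\<Sum>k\<in>{2..m}. (slope a t k - slope a t (k - 1)) * (r - t k))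
    = a m + slope a t m * (r - t m)"
  using assms
proof (induction m)
  case 0
  then show ?case by simp
next
  case (Suc m)
  show ?case
  proof (cases "m = 0")
    case True
    then show ?thesis by simp
  next
    case False
    have chord: "slope a t m * (t (Suc m) - t m) = a (Suc m) - a m"
      using Suc.prems(1)[of m] False by (simp add: slope_def Delta_def)
    have "(\<Sum>k\<in>{2..Suc m}. (slope a t k - slope a t (k - 1)) * (r - t k))
        = (\<Sum>k\<in>{2..m}. (slope a t k - slope a t (k - 1)) * (r - t k))
          + (slope a t (Suc m) - slope a t m) * (r - t (Suc m))"
      using False by (simp add: sum.cl_ivl_Suc)
    then show ?thesis using Suc False chord by (simp add: algebra_simps)
  qed
qed

lemma hinge_expansion_segment:
  assumes vJ: "valid_index_set J" and inc: "increasing_on J t" and "Suc M \<in> J"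
    and m: "1 \<le> m" "m \<le> M" and r: "t m \<le> r" "r \<le> t (Suc m)"
  shows "hinge_expansion a t M r = a m + slope a t m * (r - t m)"
proof -
  have inJ: "j \<in> J" if "1 \<le> j" "j \<le> Suc M" for j
    using valid_index_set_downward[OF vJ \<open>Suc M \<in> J\<close> that] .
  have t_le: "t i \<le> t j" if "1 \<le> i" "i \<le> j" "j \<le> Suc M" for i j
    using increasing_on_le[OF inc] inJ that by simp
  have active: "(\<Sum>k\<in>{2..m}. (slope a t k - slope a t (k - 1)) * max (r - t k) 0)
      = (\<Sum>k\<in>{2..m}. (slope a t k - slope a t (k - 1)) * (r - t k))"
  proof (rule sum.cong[OF refl])
    fix k assume "k \<in> {2..m}"
    then have "t k \<le> r" using t_le[of k m] m r by simp
    then show "(slope a t k - slope a t (k - 1)) * max (r - t k) 0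
      = (slope a t k - slope a t (k - 1)) * (r - t k)" by simp
  qed
  have inactive: "(\<Sum>k\<in>{Suc m..M}. (slope a t k - slope a t (k - 1)) * max (r - t k) 0) = 0"
  proof (rule sum.neutral, intro ballI)
    fix k assume "k \<in> {Suc m..M}"
    then have "r \<le> t k" using t_le[of "Suc m" k] m r by simp
    then show "(slope a t k - slope a t (k - 1)) * max (r - t k) 0 = 0" by simp
  qed
  have "{2..M} = {2..m} \<union> {Suc m..M}" using m by auto
  then have "hinge_expansion a t M r
      = a 1 + slope a t 1 * (r - t 1) + (\<Sum>k\<in>{2..m}. (slope a t k - slope a t (k - 1)) * (r - t k))"
    unfolding hinge_expansion_def using active inactive by (simp add: sum.union_disjoint)
  also have "\<dots> = a m + slope a t m * (r - t m)"
  proof (rule slope_increments_telescope[OF _ m(1)])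
    fix i assume "1 \<le> i" "i < m"
    then have "i \<in> J" "Suc i \<in> J" using inJ m by auto
    then show "t i \<noteq> t (Suc i)" using increasing_on_Suc[OF inc] by fastforce
  qed
  finally show ?thesis .
qed

lemma interpolant_eq_hinge_expansion:
  assumes vJ: "valid_index_set J" and inc: "increasing_on J t" and "Suc M \<in> J" and "t 1 \<le> r"
    and r: "r < t (Suc M) \<or> (finite J \<and> Suc M = Max J \<and> r = t (Suc M))"
  shows "interpolant J a t r = hinge_expansion a t M r"
  using r
proof
  assume "r < t (Suc M)"
  then obtain m where m: "1 \<le> m" "m < Suc M" "t m \<le> r" "r < t (Suc m)"
    using exists_segment[of "Suc M" t r] \<open>t 1 \<le> r\<close> by auto
  then have "m \<in> J" "Suc m \<in> J" using valid_index_set_downward[OF vJ \<open>Suc M \<in> J\<close>] by auto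
  then show ?thesis
    using interpolant_segment[OF inc _ _ m(3,4)] hinge_expansion_segment[OF vJ inc \<open>Suc M \<in> J\<close>] m
    by simp
next
  assume last: "finite J \<and> Suc M = Max J \<and> r = t (Suc M)"
  have "hinge_expansion a t M r = a (Suc M)"
  proof (cases "M = 0")
    case True
    then show ?thesis using last by (simp add: hinge_expansion_def)
  next
    case False
    then have "M \<in> J" using valid_index_set_downward[OF vJ \<open>Suc M \<in> J\<close>] by simp
    then have "t M < t (Suc M)" using increasing_on_Suc[OF inc] \<open>Suc M \<in> J\<close> by simp
    moreover have "hinge_expansion a t M r = a M + slope a t M * (t (Suc M) - t M)"
      using hinge_expansion_segment[OF vJ inc \<open>Suc M \<in> J\<close>, where m = M and r = r] False last calculation
      by simp
    ultimately show ?thesis by (simp add: slope_def Delta_def)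
  qed
  then show ?thesis using interpolant_last_node[of J t a] inc last \<open>Suc M \<in> J\<close> by simp
qed

lemma interpolant_eq_hinge_expansion_on_finite:
  assumes vJ: "valid_index_set J" and inc: "increasing_on J t"
    and "finite S" and S: "S \<subseteq> I_set J t"
  shows "\<exists>M. Suc M \<in> J \<and> (\<forall>r\<in>S. interpolant J a t r = hinge_expansion a t M r)"
proof (cases "finite J")
  case True
  note J = valid_index_set_finite[OF vJ True]
  define M where "M = Max J - 1"
  have "Suc M \<in> J" "Suc M = Max J" using J by (auto simp: M_def)
  moreover have "interpolant J a t r = hinge_expansion a t M r" if "r \<in> S" for r
  proof (rule interpolant_eq_hinge_expansion[OF vJ inc \<open>Suc M \<in> J\<close>])
    show "t 1 \<le> r" "r < t (Suc M) \<or> (finite J \<and> Suc M = Max J \<and> r = t (Suc M))"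
      using that S True \<open>Suc M = Max J\<close> by (auto simp: I_set_def)
  qed
  ultimately show ?thesis by blast
next
  case False
  have J: "J = {1..}" using valid_index_set_infinite[OF vJ False] .
  have "\<forall>r\<in>S. \<exists>i\<in>J. t 1 \<le> r \<and> r < t i" using S False by (auto simp: I_set_def)
  then obtain w where w: "\<And>r. r \<in> S \<Longrightarrow> w r \<in> J \<and> t 1 \<le> r \<and> r < t (w r)" by metis
  define M where "M = Max (w ` S)"
  have "Suc M \<in> J" using J by simp
  moreover have "interpolant J a t r = hinge_expansion a t M r" if "r \<in> S" for r
  proof (rule interpolant_eq_hinge_expansion[OF vJ inc \<open>Suc M \<in> J\<close>])
    have "w r \<le> Suc M" using that \<open>finite S\<close> by (simp add: M_def le_SucI)
    then have "t (w r) \<le> t (Suc M)" using increasing_on_le[OF inc] w[OF that] \<open>Suc M \<in> J\<close> by blast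
    then show "t 1 \<le> r" "r < t (Suc M) \<or> (finite J \<and> Suc M = Max J \<and> r = t (Suc M))"
      using w[OF that] by auto
  qed
  ultimately show ?thesis by blast
qed

lemma sum_interpolant_le_if_majorized:
  assumes vJ: "valid_index_set J" and inc: "increasing_on J t" and T: "t \<in> T_set J a"
    and p: "set p \<subseteq> I_set J t" and q: "set q \<subseteq> I_set J t" and maj: "majorized p q"
  shows "(\<Sum>r\<leftarrow>p. interpolant J a t r) \<le> (\<Sum>r\<leftarrow>q. interpolant J a t r)"
proof -
  obtain M where "Suc M \<in> J"
    and M: "\<forall>r\<in>set p \<union> set q. interpolant J a t r = hinge_expansion a t M r"
    using interpolant_eq_hinge_expansion_on_finite[OF vJ inc, where S = "set p \<union> set q" and a = a] p q
    by auto
  have convex: "0 \<le> slope a t k - slope a t (k - 1)" if "k \<in> {2..M}" for k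
  proof -
    have "k - 1 \<in> J" "Suc k \<in> J"
      using valid_index_set_downward[OF vJ \<open>Suc M \<in> J\<close>] that by auto
    with that show ?thesis using T by (auto simp: T_set_def slope_def)
  qed
  have hinge: "hinge_expansion a t M r = (a 1 - slope a t 1 * t 1) + slope a t 1 * r
      + (\<Sum>k\<in>{2..M}. (slope a t k - slope a t (k - 1)) * max (r - t k) 0)" for r
    by (simp add: hinge_expansion_def algebra_simps)
  have "(\<Sum>r\<leftarrow>p. interpolant J a t r) = (\<Sum>r\<leftarrow>p. hinge_expansion a t M r)"
    using M by (intro arg_cong[where f = sum_list] map_cong) auto
  also have "\<dots> \<le> (\<Sum>r\<leftarrow>q. hinge_expansion a t M r)"
    unfolding hinge by (rule majorized_sum_convex_hinge_comb_le[OF maj convex])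
  also have "\<dots> = (\<Sum>r\<leftarrow>q. interpolant J a t r)"
    using M by (intro arg_cong[where f = sum_list] map_cong) auto
  finally show ?thesis .
qed

lemma mem_I_set_between_nodes:
  assumes vJ: "valid_index_set J" and inc: "increasing_on J t"
    and "j \<in> J" "t 1 \<le> r" "r < t j"
  shows "r \<in> I_set J t"
proof (cases "finite J")
  case True
  then have "t j \<le> t (Max J)"
    using increasing_on_le[OF inc \<open>j \<in> J\<close> Max_in[OF True]] \<open>j \<in> J\<close> by auto
  then show ?thesis using True assms(4,5) by (simp add: I_set_def)
next
  case False
  then show ?thesis using assms(3-5) by (auto simp: I_set_def)
qed

lemma slope_le_slope_Suc_if_midpoint_convex_at_node:
  assumes inc: "increasing_on J t" and k: "k \<in> J" "Suc (Suc k) \<in> J" "Suc k \<in> J"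
    and midpoint_convex: "\<And>h. 0 < h \<Longrightarrow> h < t (Suc k) - t k \<Longrightarrow> h < t (Suc (Suc k)) - t (Suc k) \<Longrightarrow>
      2 * interpolant J a t (t (Suc k))
        \<le> interpolant J a t (t (Suc k) - h) + interpolant J a t (t (Suc k) + h)"
  shows "slope a t k \<le> slope a t (Suc k)"
proof -
  have gap1: "t k < t (Suc k)" and gap2: "t (Suc k) < t (Suc (Suc k))"
    using increasing_on_Suc[OF inc] k by auto
  define h where "h = min (t (Suc k) - t k) (t (Suc (Suc k)) - t (Suc k)) / 2"
  have h: "0 < h" "h < t (Suc k) - t k" "h < t (Suc (Suc k)) - t (Suc k)"
    using gap1 gap2 by (auto simp: h_def)
  have node: "interpolant J a t (t (Suc k)) = a (Suc k)"
    using interpolant_segment[OF inc k(3,2)] gap2 by simp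
  have left: "interpolant J a t (t (Suc k) - h) = a k + slope a t k * (t (Suc k) - h - t k)"
    using interpolant_segment[OF inc k(1,3)] h by simp
  have right: "interpolant J a t (t (Suc k) + h) = a (Suc k) + slope a t (Suc k) * h"
    using interpolant_segment[OF inc k(3,2)] h by simp
  have chord: "slope a t k * (t (Suc k) - t k) = a (Suc k) - a k"
    using gap1 by (simp add: slope_def Delta_def)
  have "0 \<le> h * (slope a t (Suc k) - slope a t k)"
    using midpoint_convex[OF h] node left right chord by (simp add: algebra_simps)
  then show ?thesis using h(1) by (simp add: zero_le_mult_iff)
qed

lemma in_T_set_if_slope_le_slope_Suc:
  assumes vJ: "valid_index_set J" and inc: "increasing_on J t"
    and step: "\<And>k. k \<in> J \<Longrightarrow> Suc (Suc k) \<in> J \<Longrightarrow> slope a t k \<le> slope a t (Suc k)"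
  shows "t \<in> T_set J a"
proof -
  have "slope a t i \<le> slope a t j" if "i \<in> J" "Suc j \<in> J" "i \<le> j" for i j
  proof (rule lift_Suc_mono_le_ivl[OF _ \<open>i \<le> j\<close>])
    show "{i..<j} \<subseteq> {k. k \<in> J \<and> Suc (Suc k) \<in> J}"
      using valid_index_set_downward[OF vJ \<open>Suc j \<in> J\<close>] valid_index_set_ge_one[OF vJ \<open>i \<in> J\<close>]
      by auto
  qed (use step in auto)
  then show ?thesis using inc by (auto simp: T_set_def slope_def)
qed

lemma sum_diff_le_sum_slope_term_diff_iff:
  assumes "length p = n" "length q = n"
  shows "(\<Sum>i<n. a (floor_t J t (p ! i)) - a (floor_t J t (q ! i)))
           \<le> (\<Sum>i<n. slope_term J a t (q ! i) - slope_term J a t (p ! i))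
    \<longleftrightarrow> (\<Sum>r\<leftarrow>p. interpolant J a t r) \<le> (\<Sum>r\<leftarrow>q. interpolant J a t r)"
  using assms
  by (simp add: sum_list_sum_nth atLeast0LessThan interpolant_def sum.distrib sum_subtractf; linarith)

lemma slope_le_slope_Suc_if_sum_interpolant_mono:
  assumes vJ: "valid_index_set J" and inc: "increasing_on J t" and k: "k \<in> J" "Suc (Suc k) \<in> J"
    and mono: "\<And>p q. length p = 2 \<Longrightarrow> length q = 2 \<Longrightarrow> set p \<subseteq> I_set J t \<Longrightarrow> set q \<subseteq> I_set J t
      \<Longrightarrow> majorized p q \<Longrightarrow> (\<Sum>r\<leftarrow>p. interpolant J a t r) \<le> (\<Sum>r\<leftarrow>q. interpolant J a t r)"
  shows "slope a t k \<le> slope a t (Suc k)"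
proof (rule slope_le_slope_Suc_if_midpoint_convex_at_node[OF inc k])
  show "Suc k \<in> J" using valid_index_set_downward[OF vJ k(2)] by simp
  have "t 1 \<le> t k"
    using increasing_on_le[OF inc valid_index_set_one[OF vJ] k(1)] valid_index_set_ge_one[OF vJ k(1)]
    by simp
  fix h assume h: "0 < h" "h < t (Suc k) - t k" "h < t (Suc (Suc k)) - t (Suc k)"
  let ?x = "t (Suc k)"
  have "{?x, ?x - h, ?x + h} \<subseteq> I_set J t"
    using mem_I_set_between_nodes[OF vJ inc k(2)] h \<open>t 1 \<le> t k\<close> by auto
  moreover have "majorized [?x, ?x] [?x - h, ?x + h]" using h by (simp add: majorized_def)
  ultimately show "2 * interpolant J a t ?x \<le> interpolant J a t (?x - h) + interpolant J a t (?x + h)"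
    using mono[of "[?x, ?x]" "[?x - h, ?x + h]"] by simp
qed

theorem theorem4p8:
  fixes J :: "nat set" and a t :: "nat \<Rightarrow> real"
  assumes "valid_index_set J"
    and "increasing_on J t"
  shows "t \<in> T_set J a \<longleftrightarrow>
    (\<forall>n\<ge>2. \<forall>p q :: real list.
       length p = n \<and> length q = n \<and> set p \<subseteq> I_set J t \<and> set q \<subseteq> I_set J t \<and> majorized p q
       \<longrightarrow> (\<Sum>i<n. a (floor_t J t (p ! i)) - a (floor_t J t (q ! i)))
           \<le> (\<Sum>i<n. slope_term J a t (q ! i) - slope_term J a t (p ! i)))"
  (is "_ \<longleftrightarrow> ?karamata")
proof
  assume "t \<in> T_set J a"
  then show ?karamata
    using sum_interpolant_le_if_majorized[OF assms] by (auto simp: sum_diff_le_sum_slope_term_diff_iff)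
next
  assume karamata: ?karamata
  show "t \<in> T_set J a"
  proof (rule in_T_set_if_slope_le_slope_Suc[OF assms])
    fix k assume "k \<in> J" "Suc (Suc k) \<in> J"
    then show "slope a t k \<le> slope a t (Suc k)"
      using karamata by (intro slope_le_slope_Suc_if_sum_interpolant_mono[OF assms])
        (auto simp: sum_diff_le_sum_slope_term_diff_iff)
  qed
qed

end
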